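(* Let $n$ be a positive integer, let $\lambda$ be an eigenvalue of the Fibonacci--Redheffer matrix $F_R(n)$, and let $\mathbf{x}=[x_i]_{i=1}^n$ be a corresponding eigenvector. Then $x_1\neq 0$.
   Context: The Fibonacci numbers are $F_1=F_2=1$, $F_n=F_{n-1}+F_{n-2}$ for $n\ge 3$. The Fibonacci--Redheffer matrix $F_R(n)=[F_R(i,j)]_{i,j=1}^n$ is defined by $F_R(i,j)=1$ if $j=1$; $F_R(i,j)=F_i$ if $i\mid j$; and $F_R(i,j)=0$ otherwise. An eigenvector for $\lambda$ is a nonzero vector $\mathbf{x}$ with $(F_R(n)-\lambda I_n)\mathbf{x}=\mathbf{0}$. *)

theory Defs
  imports "HOL-Number_Theory.Fib" "Jordan_Normal_Form.Char_Poly"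
begin

text \<open>Fibonacci--Redheffer matrix F_R(n), entries over the complex numbers.
  Isabelle matrices are 0-indexed: entry (i,j) here is the paper's entry (i+1,j+1).
  fib 1 = fib 2 = 1 as in the paper.\<close>
definition fib_redheffer :: "nat \<Rightarrow> complex mat" where
  "fib_redheffer n = mat n n (\<lambda>(i, j).
     if j = 0 then 1
     else if (i + 1) dvd (j + 1) then of_nat (fib (i + 1))
     else 0)"

end

(*
  If x_1 = 0, the rows 2..n of the eigen equation only involve x_2, ..., x_n, and they form an
  upper triangular system with nonnegative entries whose diagonal F_2 < F_3 < ... < F_n is
  strictly increasing. For such a system the eigenvalue is the diagonal entry at the last nonzero
  coordinate m; scaling x_m to 1, back substitution shows every coordinate is a nonnegative real,
  so the coordinates have a nonzero sum. Row 1, however, says that this sum is (lambda - 1) x_1 = 0.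
*)
theory Submission
  imports Defs "HOL-Library.Complex_Order"
begin

lemma fib_strict_mono:
  assumes "2 \<le> a" and "a < b"
  shows "fib a < fib b"
  using assms(2)
proof (induction b)
  case 0
  then show ?case by simp
next
  case (Suc b)
  obtain k where "b = Suc (Suc k)"
    using Suc.prems assms(1) by (metis add_2_eq_Suc le_Suc_ex less_Suc_eq_le order_trans)
  then have "fib (Suc b) = fib b + fib (Suc k)" by simp
  moreover have "fib (Suc k) > 0" by (simp add: fib_neq_0_nat)
  ultimately have "fib b < fib (Suc b)" by simp
  then show ?case using Suc by (cases "a = b") auto
qed

locale increasing_diag_nonneg_triangular =
  fixes I :: "nat set" and b :: "nat \<Rightarrow> nat \<Rightarrow> real"
  assumes finite_index: "finite I"
    and entries_nonneg: "\<lbrakk>i \<in> I; j \<in> I\<rbrakk> \<Longrightarrow> 0 \<le> b i j"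
    and below_diag_zero: "\<lbrakk>i \<in> I; j \<in> I; j < i\<rbrakk> \<Longrightarrow> b i j = 0"
    and diag_strict_mono: "\<lbrakk>i \<in> I; j \<in> I; i < j\<rbrakk> \<Longrightarrow> b i i < b j j"
begin

lemma row_sum_split:
  fixes y :: "nat \<Rightarrow> complex"
  assumes "i \<in> I"
  shows "(\<Sum>j\<in>I. of_real (b i j) * y j)
    = of_real (b i i) * y i + (\<Sum>j\<in>{j\<in>I. i < j}. of_real (b i j) * y j)"
proof -
  have "(\<Sum>j\<in>I. of_real (b i j) * y j) = (\<Sum>j\<in>insert i {j\<in>I. i < j}. of_real (b i j) * y j)"
    using assms finite_index below_diag_zero
    by (intro sum.mono_neutral_right) (auto simp: linorder_neq_iff)
  also have "\<dots> = of_real (b i i) * y i + (\<Sum>j\<in>{j\<in>I. i < j}. of_real (b i j) * y j)"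
    using finite_index by (subst sum.insert) auto
  finally show ?thesis .
qed

context
  fixes y :: "nat \<Rightarrow> complex" and lam :: complex
  assumes eigen: "\<And>i. i \<in> I \<Longrightarrow> (\<Sum>j\<in>I. of_real (b i j) * y j) = lam * y i"
begin

lemma eigenvalue_eq_diag_at_last_nonzero:
  assumes "m \<in> I" and "y m \<noteq> 0" and vanish: "\<And>j. \<lbrakk>j \<in> I; m < j\<rbrakk> \<Longrightarrow> y j = 0"
  shows "lam = of_real (b m m)"
proof -
  have "(\<Sum>j\<in>{j\<in>I. m < j}. of_real (b m j) * y j) = 0"
    using vanish by (intro sum.neutral) auto
  then have "of_real (b m m) * y m = lam * y m"
    using eigen[OF \<open>m \<in> I\<close>] row_sum_split[OF \<open>m \<in> I\<close>] by simp
  then show ?thesis using \<open>y m \<noteq> 0\<close> by simp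
qed

lemma eigenvector_nonneg:
  assumes "m \<in> I" and "y m = 1" and vanish: "\<And>j. \<lbrakk>j \<in> I; m < j\<rbrakk> \<Longrightarrow> y j = 0"
    and "j \<in> I"
  shows "0 \<le> y j"
  using \<open>j \<in> I\<close>
proof (induction "m - j" arbitrary: j rule: less_induct)
  case (less j)
  consider "m < j" | "j = m" | "j < m" by linarith
  then show ?case
  proof cases
    case 1
    then show ?thesis using vanish less.prems by simp
  next
    case 2
    then show ?thesis using \<open>y m = 1\<close> by (simp add: less_eq_complex_def)
  next
    case 3
    define tail where "tail = (\<Sum>k\<in>{k\<in>I. j < k}. of_real (b j k) * y k)"
    have "0 \<le> y k" if "k \<in> I" "j < k" for k
      using less.hyps[of k] that 3 vanish by (cases "m < k") auto
    then have "0 \<le> tail"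
      unfolding tail_def using entries_nonneg less.prems
      by (intro sum_nonneg mult_nonneg_nonneg) (auto simp: less_eq_complex_def)
    have lam: "lam = of_real (b m m)"
      using eigenvalue_eq_diag_at_last_nonzero \<open>m \<in> I\<close> \<open>y m = 1\<close> vanish by simp
    have "of_real (b m m - b j j) * y j = tail"
      using eigen[OF less.prems] row_sum_split[OF less.prems] lam
      unfolding tail_def by (simp add: algebra_simps)
    moreover have "b j j < b m m" using diag_strict_mono less.prems \<open>m \<in> I\<close> 3 by simp
    ultimately show ?thesis using \<open>0 \<le> tail\<close>
      by (auto simp: less_eq_complex_def zero_le_mult_iff)
  qed
qed

end

lemma eigenvector_sum_nonzero:
  fixes y :: "nat \<Rightarrow> complex" and lam :: complex
  assumes eigen: "\<And>i. i \<in> I \<Longrightarrow> (\<Sum>j\<in>I. of_real (b i j) * y j) = lam * y i"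
    and "k \<in> I" and "y k \<noteq> 0"
  shows "(\<Sum>j\<in>I. y j) \<noteq> 0"
proof -
  define m where "m = Max {j\<in>I. y j \<noteq> 0}"
  have support_finite: "finite {j\<in>I. y j \<noteq> 0}" using finite_index by simp
  have "m \<in> I" and "y m \<noteq> 0"
    using Max_in[OF support_finite] assms(2,3) unfolding m_def by auto
  have vanish: "y j = 0" if "j \<in> I" "m < j" for j
    using Max_ge[OF support_finite, of j] that unfolding m_def by auto
  define z where "z j = y j / y m" for j
  have z_eigen: "(\<Sum>j\<in>I. of_real (b i j) * z j) = lam * z i" if "i \<in> I" for i
    using eigen[OF that] unfolding z_def
    by (simp add: sum_divide_distrib[symmetric] mult.assoc)
  have z_nonneg: "0 \<le> z j" if "j \<in> I" for j
    using eigenvector_nonneg[OF z_eigen \<open>m \<in> I\<close>] \<open>y m \<noteq> 0\<close> vanish that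
    unfolding z_def by simp
  have "1 \<le> (\<Sum>j\<in>I. z j)"
    using member_le_sum[of m I z] z_nonneg finite_index \<open>m \<in> I\<close> \<open>y m \<noteq> 0\<close>
    unfolding z_def by simp
  moreover have "\<not> (1::complex) \<le> 0" by (simp add: less_eq_complex_def)
  ultimately have "(\<Sum>j\<in>I. z j) \<noteq> 0" by force
  then show ?thesis unfolding z_def sum_divide_distrib[symmetric] by simp
qed

end

lemma fib_redheffer_mult_vec_nth:
  assumes "dim_vec x = n" and "i < n"
  shows "(fib_redheffer n *\<^sub>v x) $ i
    = x $ 0 + (\<Sum>j\<in>{1..<n}. (if (i + 1) dvd (j + 1) then of_nat (fib (i + 1)) else 0) * x $ j)"
proof -
  have "(fib_redheffer n *\<^sub>v x) $ i = (\<Sum>j\<in>{0..<n}. fib_redheffer n $$ (i, j) * x $ j)"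
    using assms by (simp add: fib_redheffer_def scalar_prod_def)
  also have "\<dots> = x $ 0 + (\<Sum>j\<in>{1..<n}. fib_redheffer n $$ (i, j) * x $ j)"
    using assms by (simp add: sum.atLeast_Suc_lessThan fib_redheffer_def)
  also have "\<dots> = x $ 0 + (\<Sum>j\<in>{1..<n}. (if (i + 1) dvd (j + 1) then of_nat (fib (i + 1)) else 0) * x $ j)"
    using assms by (simp add: fib_redheffer_def)
  finally show ?thesis .
qed

theorem lemma2:
  fixes n :: nat and lam :: complex and x :: "complex vec"
  assumes "n > 0"
    and "eigenvalue (fib_redheffer n) lam"
    and "eigenvector (fib_redheffer n) x lam"
  shows "x $ 0 \<noteq> 0"
proof
  assume x0: "x $ 0 = 0"
  have dim: "dim_vec x = n" and "x \<noteq> 0\<^sub>v n" and eq: "fib_redheffer n *\<^sub>v x = lam \<cdot>\<^sub>v x"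
    using assms(3) by (auto simp: eigenvector_def fib_redheffer_def)
  define b where "b i j = (if (i + 1) dvd (j + 1) then real (fib (i + 1)) else 0)" for i j
  interpret increasing_diag_nonneg_triangular "{1..<n}" b
    by unfold_locales
      (auto simp: b_def nat_dvd_not_less intro: fib_strict_mono)
  have b_complex: "of_real (b i j) = (if (i + 1) dvd (j + 1) then of_nat (fib (i + 1)) else 0)" for i j
    by (simp add: b_def)
  have row: "lam * x $ i = x $ 0 + (\<Sum>j\<in>{1..<n}. of_real (b i j) * x $ j)" if "i < n" for i
    using arg_cong[OF eq, of "\<lambda>v. v $ i"] fib_redheffer_mult_vec_nth[OF dim that] dim that
    by (simp add: b_complex)
  obtain k where "k \<in> {1..<n}" and "x $ k \<noteq> 0"
    using \<open>x \<noteq> 0\<^sub>v n\<close> x0 dim by (metis atLeastLessThan_iff eq_vecI index_zero_vec less_one not_le)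
  then have "(\<Sum>j\<in>{1..<n}. x $ j) \<noteq> 0"
    using row x0 by (intro eigenvector_sum_nonzero[where lam = lam]) auto
  moreover have "(\<Sum>j\<in>{1..<n}. x $ j) = 0"
    using row[OF \<open>n > 0\<close>] x0 by (simp add: b_def)
  ultimately show False by contradiction
qed

end
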